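(* Let $\theta\in[0,1]$ and $\psi=\frac12-\frac{\theta}{4}$. On the cycle graph $C_5$, for $i\in\{1,2\}$ let $P^i_n$ be the probability that the tipsy cop and drunken robber game, started with cop and robber at distance $i$ and the robber moving first, lasts at least $n$ rounds, and let $P_i(t)=\sum_{n=0}^\infty P^i_n t^n$. Then \[ P_1(t)=\frac{1-\frac{\theta t}{4}}{\left(1-\frac{\theta t}{4}\right)(2-\psi t)-1},\qquad P_2(t)=\frac{1}{\left(1-\frac{\theta t}{4}\right)(2-\psi t)-1}. \]
   Context: Tipsy cop and drunken robber game on a graph: a cop and a robber occupy distinct vertices and alternate moves, the robber moving first; on each move the mover must move to an adjacent vertex (no staying put). The robber always moves to a uniformly random neighbor. The cop, independently at each of her moves, with probability $\theta$ moves to a uniformly random neighbor and with probability $1-\theta$ moves to a neighbor that decreases her distance to the robber (onto the robber if adjacent). All random choices are independent; the robber is captured (game over) as soon as both occupy the same vertex. A round consists of one robber move followed by one cop move; "lasts at least $n$ rounds" means no capture during the first $2n$ moves, and $P^i_0=1$. *)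

theory Defs
  imports Complex_Main
begin

definition c5_nbrs :: "nat \<Rightarrow> nat list" where
  "c5_nbrs v = [(v + 1) mod 5, (v + 4) mod 5]"

definition c5_dist :: "nat \<Rightarrow> nat \<Rightarrow> nat" where
  "c5_dist u v = min ((u + 5 - v) mod 5) ((v + 5 - u) mod 5)"

definition avg_list :: "('a \<Rightarrow> real) \<Rightarrow> 'a list \<Rightarrow> real" where
  "avg_list f xs = (\<Sum>x\<leftarrow>xs. f x) / real (length xs)"

text \<open>Probability that the game with cop at c and robber at r (robber to move) lasts at
  least n rounds.\<close>
fun tipsy_surv :: "real \<Rightarrow> nat \<Rightarrow> nat \<Rightarrow> nat \<Rightarrow> real" where
  "tipsy_surv \<theta> 0 c r = 1"
| "tipsy_surv \<theta> (Suc n) c r =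
     avg_list (\<lambda>r'. if r' = c then 0 else
        (let cont = (\<lambda>c'. if c' = r' then 0 else tipsy_surv \<theta> n c' r') in
          \<theta> * avg_list cont (c5_nbrs c)
          + (1 - \<theta>) * avg_list cont
               (filter (\<lambda>c'. c5_dist c' r' < c5_dist c r') (c5_nbrs c))))
     (c5_nbrs r)"

end

theory Submission
  imports Defs
begin

text \<open>By the symmetry of \<open>C\<^sub>5\<close> the survival probability depends only on the distance
  \<open>d \<in> {1, 2}\<close> between cop and robber, and one round acts on the pair \<open>(P\<^sup>1\<^sub>n, P\<^sup>2\<^sub>n)\<close> as a
  fixed substochastic matrix. Both generating functions are therefore bounded power series
  that satisfy a \<open>2 \<times> 2\<close> linear system, which Cramer's rule solves; its determinant is the
  stated denominator, positive for \<open>|t| < 1\<close>.\<close>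

text \<open>The remaining mass is capture.
  The second equation is used for every \<open>d \<noteq> 1\<close>, but only \<open>d = 2\<close> is meaningful.\<close>
fun c5_dist_surv :: "real \<Rightarrow> nat \<Rightarrow> nat \<Rightarrow> real" where
  "c5_dist_surv \<theta> 0 d = 1"
| "c5_dist_surv \<theta> (Suc n) d =
     (if d = 1 then (1/2 - \<theta>/4) * c5_dist_surv \<theta> n 1 + \<theta>/4 * c5_dist_surv \<theta> n 2
      else (1/2 - \<theta>/4) * c5_dist_surv \<theta> n 1 + \<theta>/2 * c5_dist_surv \<theta> n 2)"

lemma tipsy_surv_eq_c5_dist_surv:
  assumes "c < 5" "r < 5" "c \<noteq> r"
  shows "tipsy_surv \<theta> n c r = c5_dist_surv \<theta> n (c5_dist c r)"
  using assms
proof (induction n arbitrary: c r)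
  case 0
  then show ?case by simp
next
  case (Suc n)
  have "c \<in> {0, 1, 2, 3, 4}" "r \<in> {0, 1, 2, 3, 4}"
    using Suc.prems by auto
  then show ?case
    using Suc.prems
    by (elim insertE emptyE)
      (simp_all add: c5_nbrs_def c5_dist_def avg_list_def Suc.IH Let_def field_simps)
qed

lemma abs_convex_comb_le_1:
  fixes \<alpha> \<beta> x y :: real
  assumes "0 \<le> \<alpha>" "0 \<le> \<beta>" "\<alpha> + \<beta> \<le> 1" "\<bar>x\<bar> \<le> 1" "\<bar>y\<bar> \<le> 1"
  shows "\<bar>\<alpha> * x + \<beta> * y\<bar> \<le> 1"
proof -
  have "\<bar>\<alpha> * x + \<beta> * y\<bar> \<le> \<alpha> * \<bar>x\<bar> + \<beta> * \<bar>y\<bar>"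
    using assms(1,2) by (metis abs_mult abs_of_nonneg abs_triangle_ineq)
  also have "\<dots> \<le> \<alpha> + \<beta>"
    using assms by (intro add_mono mult_right_le_one_le) auto
  finally show ?thesis
    using assms(3) by linarith
qed

lemma abs_c5_dist_surv_le_1:
  assumes "0 \<le> \<theta>" "\<theta> \<le> 1"
  shows "\<bar>c5_dist_surv \<theta> n d\<bar> \<le> 1"
proof (induction n arbitrary: d)
  case 0
  then show ?case by simp
next
  case (Suc n)
  have "\<bar>(1/2 - \<theta>/4) * c5_dist_surv \<theta> n 1 + \<theta>/4 * c5_dist_surv \<theta> n 2\<bar> \<le> 1"
    and "\<bar>(1/2 - \<theta>/4) * c5_dist_surv \<theta> n 1 + \<theta>/2 * c5_dist_surv \<theta> n 2\<bar> \<le> 1"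
    using assms Suc.IH by (intro abs_convex_comb_le_1; simp)+
  then show ?case
    by simp
qed

lemma summable_bounded_power_series:
  fixes f :: "nat \<Rightarrow> real"
  assumes "\<And>n. \<bar>f n\<bar> \<le> 1" "\<bar>t\<bar> < 1"
  shows "summable (\<lambda>n. f n * t ^ n)"
proof (rule summable_comparison_test')
  show "summable (\<lambda>n. \<bar>t\<bar> ^ n)"
    using assms(2) by (simp add: summable_geometric)
  show "norm (f n * t ^ n) \<le> \<bar>t\<bar> ^ n" for n
    using assms(1)[of n] by (simp add: abs_mult power_abs mult_left_le_one_le)
qed

lemma power_series_linear_recurrence:
  fixes x y z :: "nat \<Rightarrow> 'a::real_normed_field"
  assumes "(\<lambda>n. x n * t ^ n) sums X" "(\<lambda>n. y n * t ^ n) sums Y"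
    and "(\<lambda>n. z n * t ^ n) sums Z"
    and "\<And>n. z (Suc n) = a * x n + b * y n"
  shows "Z = z 0 + t * (a * X + b * Y)"
proof -
  have "(\<lambda>n. z (Suc n) * t ^ Suc n) sums (Z - z 0)"
    using assms(3) by (subst sums_Suc_iff) simp
  moreover have "(\<lambda>n. t * a * (x n * t ^ n) + t * b * (y n * t ^ n)) sums (t * a * X + t * b * Y)"
    using assms(1,2) by (intro sums_add sums_mult)
  then have "(\<lambda>n. z (Suc n) * t ^ Suc n) sums (t * (a * X + b * Y))"
    by (simp add: assms(4) algebra_simps)
  ultimately show ?thesis
    by (metis diff_eq_eq sums_unique2 add.commute)
qed

lemma cramer_2x2:
  fixes x y :: "'a::field"
  assumes "p * x + q * y = u" "r * x + s * y = v" "p * s - q * r \<noteq> 0"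
  shows "x = (u * s - q * v) / (p * s - q * r)" "y = (p * v - r * u) / (p * s - q * r)"
  using assms by (auto simp: field_simps)

lemma c5_denominator_gt_1:
  fixes \<theta> t :: real
  assumes "0 \<le> \<theta>" "\<theta> \<le> 1" "\<bar>t\<bar> < 1"
  shows "(1 - \<theta> * t / 4) * (2 - (1/2 - \<theta>/4) * t) > 1"
proof -
  have "\<bar>\<theta> * t\<bar> \<le> 1"
    using assms by (simp add: abs_mult mult_le_one)
  moreover have "\<bar>(1/2 - \<theta>/4) * t\<bar> \<le> 1/2"
  proof -
    have "\<bar>1/2 - \<theta>/4\<bar> * \<bar>t\<bar> \<le> 1/2 * 1"
      using assms by (intro mult_mono) auto
    then show ?thesis
      by (simp add: abs_mult)
  qed
  ultimately have "3/4 \<le> 1 - \<theta> * t / 4" "3/2 \<le> 2 - (1/2 - \<theta>/4) * t"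
    by (simp_all only: abs_le_iff) linarith+
  then have "3/4 * (3/2) \<le> (1 - \<theta> * t / 4) * (2 - (1/2 - \<theta>/4) * t)"
    by (intro mult_mono) auto
  then show ?thesis
    by linarith
qed

lemma c5_dist_surv_generating_functions:
  fixes \<theta> t :: real
  assumes "0 \<le> \<theta>" "\<theta> \<le> 1" "\<bar>t\<bar> < 1"
  defines "D \<equiv> (1 - \<theta> * t / 4) * (2 - (1/2 - \<theta>/4) * t) - 1"
  shows "(\<lambda>n. c5_dist_surv \<theta> n 1 * t ^ n) sums ((1 - \<theta> * t / 4) / D)"
    and "(\<lambda>n. c5_dist_surv \<theta> n 2 * t ^ n) sums (1 / D)"
proof -
  have "summable (\<lambda>n. c5_dist_surv \<theta> n d * t ^ n)" for d
    using assms by (intro summable_bounded_power_series abs_c5_dist_surv_le_1)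
  then obtain S1 S2 where S1: "(\<lambda>n. c5_dist_surv \<theta> n 1 * t ^ n) sums S1"
    and S2: "(\<lambda>n. c5_dist_surv \<theta> n 2 * t ^ n) sums S2"
    using summable_sums by blast
  have "S1 = 1 + t * ((1/2 - \<theta>/4) * S1 + \<theta>/4 * S2)"
    using power_series_linear_recurrence[OF S1 S2 S1, where a = "1/2 - \<theta>/4" and b = "\<theta>/4"]
    by simp
  then have eq1: "(1 - t * (1/2 - \<theta>/4)) * S1 + (- t * \<theta>/4) * S2 = 1"
    by (simp add: algebra_simps)
  have "S2 = 1 + t * ((1/2 - \<theta>/4) * S1 + \<theta>/2 * S2)"
    using power_series_linear_recurrence[OF S1 S2 S2, where a = "1/2 - \<theta>/4" and b = "\<theta>/2"]
    by simp
  then have eq2: "(- t * (1/2 - \<theta>/4)) * S1 + (1 - t * \<theta>/2) * S2 = 1"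
    by (simp add: algebra_simps)
  have det: "(1 - t * (1/2 - \<theta>/4)) * (1 - t * \<theta>/2) - (- t * \<theta>/4) * (- t * (1/2 - \<theta>/4)) = D"
    by (simp add: D_def algebra_simps)
  have "D \<noteq> 0"
    using c5_denominator_gt_1[OF assms(1-3)] by (simp add: D_def)
  note solution = cramer_2x2[OF eq1 eq2, unfolded det, OF this]
  have "S1 = (1 - \<theta> * t / 4) / D" "S2 = 1 / D"
    using solution by (simp_all add: algebra_simps)
  with S1 S2 show "(\<lambda>n. c5_dist_surv \<theta> n 1 * t ^ n) sums ((1 - \<theta> * t / 4) / D)"
    and "(\<lambda>n. c5_dist_surv \<theta> n 2 * t ^ n) sums (1 / D)"
    by simp_all
qed

theorem mainTheorem9:
  fixes \<theta> t :: real and c r :: nat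
  assumes "0 \<le> \<theta>" "\<theta> \<le> 1" "\<bar>t\<bar> < 1" "c < 5" "r < 5"
  defines "\<psi> \<equiv> 1/2 - \<theta> / 4"
  shows "(c5_dist c r = 1 \<longrightarrow>
           (\<lambda>n. tipsy_surv \<theta> n c r * t ^ n) sums
             ((1 - \<theta> * t / 4) / ((1 - \<theta> * t / 4) * (2 - \<psi> * t) - 1)))
       \<and> (c5_dist c r = 2 \<longrightarrow>
           (\<lambda>n. tipsy_surv \<theta> n c r * t ^ n) sums
             (1 / ((1 - \<theta> * t / 4) * (2 - \<psi> * t) - 1)))"
proof -
  have "c \<noteq> r" if "c5_dist c r \<in> {1, 2}"
    using that by (auto simp: c5_dist_def)
  then have "tipsy_surv \<theta> n c r = c5_dist_surv \<theta> n (c5_dist c r)"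
    if "c5_dist c r \<in> {1, 2}" for n
    using that assms(4,5) by (simp add: tipsy_surv_eq_c5_dist_surv)
  then show ?thesis
    using c5_dist_surv_generating_functions[OF assms(1-3)] by (simp add: \<psi>_def)
qed

end
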